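(* Let $S=\{(X_1,y_1),(X_2,y_2)\}\in\mathcal{S}_2$ be such that at least one principal angle between $\mathrm{range}(X_1^\top)$ and $\mathrm{range}(X_2^\top)$ is non-zero, and let $\theta_F$ be the smallest non-zero such principal angle (the Friedrichs angle). Under the cyclic ordering, after $k=2n$ iterations ($n\ge1$), $$\|w_k-w^\star\|^2\le(\cos^2\theta_F)^{k-1}\|w^\star\|^2 .$$ Moreover the bound is tight: for the given $X_1,X_2$ there exist labels $y_1,y_2$ with $S\in\mathcal{S}_2$ for which equality holds.
   Context: Let $d\ge 1$, $T\ge1$. A task is a pair $(X_m,y_m)$ with $X_m\in\mathbb{R}^{n_m\times d}$, $y_m\in\mathbb{R}^{n_m}$ and $\operatorname{rank}(X_m)<d$. $\mathcal{S}_T$ denotes the set of collections $S=\{(X_m,y_m)\}_{m=1}^T$ of $T$ tasks such that $\|X_m\|\le 1$ (spectral norm) for all $m$ and there exists $w\in\mathbb{R}^d$ with $\|w\|\le 1$ and $y_m=X_mw$ for all $m$. Given $S$ and an ordering $\tau:\mathbb{N}^+\to\{1,\dots,T\}$, the iterates are $w_0=0$ and $w_t=w_{t-1}+X_{\tau(t)}^+(y_{\tau(t)}-X_{\tau(t)}w_{t-1})$, with $A^+$ the Moore–Penrose pseudoinverse. The cyclic ordering is $\tau(t)=((t-1)\bmod T)+1$. $w^\star$ denotes the minimum Euclidean-norm vector with $X_mw^\star=y_m$ for all $m$. Principal angles: for data matrices $X_1,X_2$ let $r=\min(\operatorname{rank}X_1,\operatorname{rank}X_2)$. The principal angles $0\le\theta_1\le\dots\le\theta_r\le\pi/2$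 between $\mathrm{range}(X_1^\top)$ and $\mathrm{range}(X_2^\top)$ are defined recursively by $\cos\theta_i=|u_i^\top v_i|$, where $(u_i,v_i)$ maximizes $|u^\top v|$ over unit vectors $u\in\mathrm{range}(X_1^\top)$, $v\in\mathrm{range}(X_2^\top)$ with $u\perp u_j$, $v\perp v_j$ for all $j<i$. *)

theory Defs
  imports "HOL-Analysis.Analysis"
begin

definition pinv :: "real^'d^'n \<Rightarrow> real^'n^'d" where
  "pinv A = (THE B. A ** B ** A = A \<and> B ** A ** B = B \<and>
                    transpose (A ** B) = A ** B \<and> transpose (B ** A) = B ** A)"

definition spec_norm :: "real^'d^'n \<Rightarrow> real" where
  "spec_norm A = onorm (\<lambda>x. A *v x)"

definition is_task :: "real^'d^'n \<Rightarrow> real^'n \<Rightarrow> bool" where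
  "is_task X y \<longleftrightarrow> rank X < CARD('d)"

definition in_S2 :: "real^'d^'n1 \<Rightarrow> real^'n1 \<Rightarrow> real^'d^'n2 \<Rightarrow> real^'n2 \<Rightarrow> bool" where
  "in_S2 X1 y1 X2 y2 \<longleftrightarrow> is_task X1 y1 \<and> is_task X2 y2 \<and>
     spec_norm X1 \<le> 1 \<and> spec_norm X2 \<le> 1 \<and>
     (\<exists>w. norm w \<le> 1 \<and> y1 = X1 *v w \<and> y2 = X2 *v w)"

definition wstar :: "real^'d^'n1 \<Rightarrow> real^'n1 \<Rightarrow> real^'d^'n2 \<Rightarrow> real^'n2 \<Rightarrow> real^'d" where
  "wstar X1 y1 X2 y2 = (THE w. X1 *v w = y1 \<and> X2 *v w = y2 \<and>
      (\<forall>v. X1 *v v = y1 \<and> X2 *v v = y2 \<longrightarrow> norm w \<le> norm v))"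

definition proj_step :: "real^'d^'n \<Rightarrow> real^'n \<Rightarrow> real^'d \<Rightarrow> real^'d" where
  "proj_step X y w = w + pinv X *v (y - X *v w)"

text \<open>Iterates under the cyclic ordering with T = 2: w_0 = 0, and step t (t \<ge> 1)
  uses task tau(t) = ((t-1) mod 2) + 1.\<close>
fun cyc_iter :: "real^'d^'n1 \<Rightarrow> real^'n1 \<Rightarrow> real^'d^'n2 \<Rightarrow> real^'n2 \<Rightarrow> nat \<Rightarrow> real^'d" where
  "cyc_iter X1 y1 X2 y2 0 = 0"
| "cyc_iter X1 y1 X2 y2 (Suc t) =
     (if t mod 2 = 0 then proj_step X1 y1 (cyc_iter X1 y1 X2 y2 t)
      else proj_step X2 y2 (cyc_iter X1 y1 X2 y2 t))"

definition principal_vectors ::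
  "('a::real_inner) set \<Rightarrow> 'a set \<Rightarrow> nat \<Rightarrow> (nat \<Rightarrow> 'a) \<Rightarrow> (nat \<Rightarrow> 'a) \<Rightarrow> bool" where
  "principal_vectors U V r u v \<longleftrightarrow>
     (\<forall>i<r. u i \<in> U \<and> v i \<in> V \<and> norm (u i) = 1 \<and> norm (v i) = 1 \<and>
        (\<forall>j<i. u i \<bullet> u j = 0 \<and> v i \<bullet> v j = 0) \<and>
        (\<forall>x y. x \<in> U \<and> y \<in> V \<and> norm x = 1 \<and> norm y = 1 \<and>
               (\<forall>j<i. x \<bullet> u j = 0 \<and> y \<bullet> v j = 0) \<longrightarrow> \<bar>x \<bullet> y\<bar> \<le> \<bar>u i \<bullet> v i\<bar>))"

definition row_range :: "real^'d^'n \<Rightarrow> (real^'d) set" where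
  "row_range X = range (\<lambda>z. transpose X *v z)"

end

theory Submission
  imports Defs
begin

text \<open>
  Let P1, P2 be the orthogonal projections onto the null spaces \<open>U\<^sup>\<bottom>\<close>, \<open>V\<^sup>\<bottom>\<close> of X1, X2, where
  U, V are the row spaces. Each step of the cyclic iteration applies P1 or P2 to the error
  \<open>w\<^sub>t - w\<^sup>*\<close>, which starts at \<open>-w\<^sup>*\<close> and stays orthogonal to \<open>M = U\<^sup>\<bottom> \<inter> V\<^sup>\<bottom>\<close>.

  On \<open>U\<^sup>\<bottom> \<inter> M\<^sup>\<bottom>\<close> the projection P2 shrinks norms by the factor \<open>c = cos \<theta>F\<close>. A unit maximiser z
  of \<open>norm (P2 z)\<close> there is an eigenvector of P1 P2 with eigenvalue \<open>A = (norm (P2 z))\<^sup>2\<close>. The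
  vectors obtained by projecting P2 z onto U and z onto V are orthogonal to \<open>U \<inter> V\<close>, which
  contains all principal vectors of angle zero, so the extremal property of the principal pair
  of the Friedrichs angle bounds their inner product \<open>A\<^sup>2 - A\<close>, and this yields \<open>A \<le> c\<^sup>2\<close>.
  Alternating the two projections 2n times gives the factor \<open>c ^ (2n - 1)\<close> on the error norm.

  For tightness, with \<open>s = u\<^sub>F \<bullet> v\<^sub>F\<close> the vector \<open>x = v\<^sub>F - s u\<^sub>F\<close> satisfies \<open>P1 (P2 x) = s\<^sup>2 x\<close>,
  because the projection of \<open>v\<^sub>F\<close> onto U is \<open>s u\<^sub>F\<close> and symmetrically; labels with \<open>w\<^sup>* = -x\<close>
  attain the bound.
\<close>

section \<open>Orthogonal projections\<close>

lemma orthogonal_comp_iff: "x \<in> S\<^sup>\<bottom> \<longleftrightarrow> (\<forall>s\<in>S. s \<bullet> x = 0)"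
  by (simp add: orthogonal_comp_def orthogonal_def)

definition orth_proj :: "'a::euclidean_space set \<Rightarrow> 'a \<Rightarrow> 'a" where
  "orth_proj S x = (THE p. p \<in> S \<and> x - p \<in> S\<^sup>\<bottom>)"

context
  fixes S :: "'a::euclidean_space set"
  assumes S: "subspace S"
begin

lemma orth_proj_eqI:
  assumes "p \<in> S" "x - p \<in> S\<^sup>\<bottom>"
  shows "orth_proj S x = p"
  unfolding orth_proj_def
proof (rule the_equality)
  fix q assume q: "q \<in> S \<and> x - q \<in> S\<^sup>\<bottom>"
  have "(x - q) - (x - p) \<in> S\<^sup>\<bottom>"
    by (rule subspace_diff[OF subspace_orthogonal_comp]) (use assms(2) q in simp_all)
  then have "p - q \<in> S\<^sup>\<bottom>"
    by simp
  moreover have "p - q \<in> S"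
    using assms(1) q S by (simp add: subspace_diff)
  ultimately have "p - q = 0"
    using orthogonal_Int_0[OF S] by blast
  then show "q = p"
    by simp
qed (use assms in simp)

lemma orth_proj_decomp: "orth_proj S x \<in> S \<and> x - orth_proj S x \<in> S\<^sup>\<bottom>"
proof -
  obtain p q where "p \<in> S" "q \<in> S\<^sup>\<bottom>" "x = p + q"
    using subspace_sum_orthogonal_comp[OF S] set_plus_elim by (metis UNIV_I)
  then show ?thesis
    using orth_proj_eqI[of p x] by auto
qed

lemma orth_proj_in: "orth_proj S x \<in> S"
  using orth_proj_decomp by blast

lemma orth_proj_residual: "x - orth_proj S x \<in> S\<^sup>\<bottom>"
  using orth_proj_decomp by blast

lemma orth_proj_id: "x \<in> S \<Longrightarrow> orth_proj S x = x"
  by (rule orth_proj_eqI) (auto simp: orthogonal_comp_iff)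

lemma orth_proj_eq_0: "x \<in> S\<^sup>\<bottom> \<Longrightarrow> orth_proj S x = 0"
  by (rule orth_proj_eqI) (auto simp: subspace_0[OF S])

lemma linear_orth_proj: "linear (orth_proj S)"
proof (rule linearI)
  fix x y
  have "(x - orth_proj S x) + (y - orth_proj S y) \<in> S\<^sup>\<bottom>"
    by (rule subspace_add[OF subspace_orthogonal_comp]) (simp_all add: orth_proj_residual)
  then show "orth_proj S (x + y) = orth_proj S x + orth_proj S y"
    using orth_proj_in by (intro orth_proj_eqI) (simp_all add: S subspace_add algebra_simps)
next
  fix c :: real and x
  have "c *\<^sub>R (x - orth_proj S x) \<in> S\<^sup>\<bottom>"
    by (rule subspace_scale[OF subspace_orthogonal_comp]) (simp add: orth_proj_residual)
  then show "orth_proj S (c *\<^sub>R x) = c *\<^sub>R orth_proj S x"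
    using orth_proj_in by (intro orth_proj_eqI) (simp_all add: S subspace_scale algebra_simps)
qed

lemma orth_proj_self_adjoint: "orth_proj S x \<bullet> y = x \<bullet> orth_proj S y"
proof -
  have "orth_proj S x \<bullet> (y - orth_proj S y) = 0" "(x - orth_proj S x) \<bullet> orth_proj S y = 0"
    using orth_proj_in orth_proj_residual by (auto simp: orthogonal_comp_iff inner_commute)
  then show ?thesis
    by (simp add: inner_diff_left inner_diff_right)
qed

lemma inner_orth_proj_self: "orth_proj S x \<bullet> orth_proj S x = x \<bullet> orth_proj S x"
  using orth_proj_self_adjoint[of x "orth_proj S x"] orth_proj_id[OF orth_proj_in] by simp

lemma norm_orth_proj_pythagoras:
  "(norm x)\<^sup>2 = (norm (orth_proj S x))\<^sup>2 + (norm (x - orth_proj S x))\<^sup>2"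
  using inner_orth_proj_self[of x]
  by (simp add: power2_norm_eq_inner inner_diff_left inner_diff_right inner_commute)

lemma norm_orth_proj_le: "norm (orth_proj S x) \<le> norm x"
  using norm_orth_proj_pythagoras[of x] by (simp add: power2_le_imp_le)

lemma norm_orth_proj_less:
  assumes "x \<notin> S"
  shows "norm (orth_proj S x) < norm x"
proof -
  have "x - orth_proj S x \<noteq> 0"
    using assms orth_proj_in[of x] by auto
  then have "(norm (orth_proj S x))\<^sup>2 < (norm x)\<^sup>2"
    using norm_orth_proj_pythagoras[of x] by simp
  then show ?thesis
    by (rule power2_less_imp_less) simp
qed

lemma orth_proj_preserves_orthogonal_comp:
  assumes "T \<subseteq> S" "x \<in> T\<^sup>\<bottom>"
  shows "orth_proj S x \<in> T\<^sup>\<bottom>"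
  unfolding orthogonal_comp_iff
proof
  fix t assume "t \<in> T"
  then have "t \<bullet> orth_proj S x = orth_proj S t \<bullet> x"
    using assms(1) orth_proj_self_adjoint[of t x] by (simp add: inner_commute)
  also have "\<dots> = t \<bullet> x"
    using \<open>t \<in> T\<close> assms(1) orth_proj_id by auto
  finally show "t \<bullet> orth_proj S x = 0"
    using \<open>t \<in> T\<close> assms(2) by (simp add: orthogonal_comp_iff)
qed

end

lemma orth_proj_orthogonal_comp:
  assumes "subspace S"
  shows "orth_proj (S\<^sup>\<bottom>) x = x - orth_proj S x"
  using assms orth_proj_in orth_proj_residual orthogonal_comp_self[OF assms]
  by (intro orth_proj_eqI[OF subspace_orthogonal_comp]) auto

section \<open>Maximising a norm ratio on a subspace\<close>

lemma eq_0_if_linear_le_quadratic: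
  fixes a K :: real
  assumes "\<And>t. 2 * t * a \<le> t\<^sup>2 * K"
  shows "a = 0"
proof (rule ccontr)
  assume "a \<noteq> 0"
  define m where "m = \<bar>K\<bar> + 1"
  have m: "m > 0"
    by (simp add: m_def add_nonneg_pos)
  have "2 * (a / m) * a \<le> (a / m)\<^sup>2 * K"
    by (rule assms)
  then have "2 * (a / m) * a * m\<^sup>2 \<le> (a / m)\<^sup>2 * K * m\<^sup>2"
    by (rule mult_right_mono) simp
  then have "2 * a\<^sup>2 * m \<le> a\<^sup>2 * K"
    using m by (simp add: power2_eq_square field_simps)
  moreover have "a\<^sup>2 * K < 2 * a\<^sup>2 * m"
    using \<open>a \<noteq> 0\<close> by (simp add: m_def abs_if)
  ultimately show False
    by linarith
qed

lemma linear_maximizer_orthogonal: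
  fixes L :: "'a::real_inner \<Rightarrow> 'b::real_inner"
  assumes L: "linear L" and x: "norm x = 1" and xh: "x \<bullet> h = 0"
    and max: "\<And>t. norm (L (x + t *\<^sub>R h)) \<le> norm (L x) * norm (x + t *\<^sub>R h)"
  shows "L x \<bullet> L h = 0"
proof (rule eq_0_if_linear_le_quadratic)
  fix t :: real
  have "(norm (L (x + t *\<^sub>R h)))\<^sup>2 \<le> (norm (L x) * norm (x + t *\<^sub>R h))\<^sup>2"
    using max by (simp add: power_mono)
  moreover have "(norm (L (x + t *\<^sub>R h)))\<^sup>2 = (norm (L x))\<^sup>2 + 2 * t * (L x \<bullet> L h) + t\<^sup>2 * (norm (L h))\<^sup>2"
    unfolding linear_add[OF L] linear_scale[OF L] power2_norm_eq_inner
    by (simp add: inner_add_left inner_add_right inner_commute power2_eq_square algebra_simps)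
  moreover have "(norm (x + t *\<^sub>R h))\<^sup>2 = 1 + t\<^sup>2 * (norm h)\<^sup>2"
    using x xh unfolding power2_norm_eq_inner
    by (simp add: norm_eq_1 inner_add_left inner_add_right inner_commute power2_eq_square algebra_simps)
  ultimately show "2 * t * (L x \<bullet> L h) \<le> t\<^sup>2 * ((norm (L x))\<^sup>2 * (norm h)\<^sup>2 - (norm (L h))\<^sup>2)"
    by (simp add: power_mult_distrib algebra_simps)
qed

lemma linear_attains_max_ratio:
  fixes L :: "'a::euclidean_space \<Rightarrow> 'b::real_normed_vector"
  assumes L: "linear L" and W: "subspace W" and x: "x \<in> W" "x \<noteq> 0"
  obtains z where "z \<in> W" "norm z = 1" "\<And>y. y \<in> W \<Longrightarrow> norm (L y) \<le> norm (L z) * norm y"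
proof -
  have "compact (W \<inter> sphere 0 1)"
    by (simp add: closed_Int_compact W closed_subspace)
  moreover have "(1 / norm x) *\<^sub>R x \<in> W \<inter> sphere 0 1"
    using x W by (simp add: subspace_scale)
  moreover have "continuous_on (W \<inter> sphere 0 1) (\<lambda>y. norm (L y))"
    using L by (intro continuous_intros linear_continuous_on) (simp add: linear_linear)
  ultimately obtain z where z: "z \<in> W \<inter> sphere 0 1"
    and max: "\<And>y. y \<in> W \<inter> sphere 0 1 \<Longrightarrow> norm (L y) \<le> norm (L z)"
    using continuous_attains_sup[of "W \<inter> sphere 0 1" "\<lambda>y. norm (L y)"] by blast
  have "norm (L y) \<le> norm (L z) * norm y" if "y \<in> W" for y
  proof (cases "y = 0")
    case False
    then have "norm (L ((1 / norm y) *\<^sub>R y)) \<le> norm (L z)"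
      using that W by (intro max) (simp add: subspace_scale)
    then show ?thesis
      using False by (simp add: linear_scale[OF L] field_simps)
  qed (simp add: linear_0[OF L])
  with z show ?thesis
    by (intro that[of z]) auto
qed

section \<open>Principal vectors\<close>

lemma principal_vectors_swap:
  "principal_vectors U V r u v \<Longrightarrow> principal_vectors V U r v u"
  unfolding principal_vectors_def by (metis inner_commute)

lemma principal_vectorsD:
  assumes "principal_vectors U V r u v" "i < r"
  shows "u i \<in> U" "v i \<in> V" "norm (u i) = 1" "norm (v i) = 1"
    "\<And>j. j < i \<Longrightarrow> u i \<bullet> u j = 0" "\<And>j. j < i \<Longrightarrow> v i \<bullet> v j = 0"
  using assms unfolding principal_vectors_def by auto

lemma principal_cos_le_1:
  assumes "principal_vectors U V r u v" "i < r"
  shows "\<bar>u i \<bullet> v i\<bar> \<le> 1"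
  using Cauchy_Schwarz_ineq2[of "u i" "v i"] principal_vectorsD[OF assms] by simp

lemma principal_cos_antimono:
  assumes pv: "principal_vectors U V r u v" and "i \<le> j" "j < r"
  shows "\<bar>u j \<bullet> v j\<bar> \<le> \<bar>u i \<bullet> v i\<bar>"
proof -
  have "i < r" "\<And>k. k < i \<Longrightarrow> u j \<bullet> u k = 0 \<and> v j \<bullet> v k = 0"
    using principal_vectorsD(5,6)[OF pv \<open>j < r\<close>] assms(2,3) by auto
  then show ?thesis
    using pv principal_vectorsD(1-4)[OF pv \<open>j < r\<close>] unfolding principal_vectors_def by blast
qed

lemma principal_vectors_max:
  assumes "principal_vectors U V r u v" "i < r" "x \<in> U" "y \<in> V" "norm x = 1" "norm y = 1"
    "\<And>j. j < i \<Longrightarrow> x \<bullet> u j = 0 \<and> y \<bullet> v j = 0"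
  shows "\<bar>x \<bullet> y\<bar> \<le> \<bar>u i \<bullet> v i\<bar>"
  using assms unfolding principal_vectors_def by blast

lemma principal_vectors_inner_le:
  fixes U V :: "'a::real_inner set"
  assumes pv: "principal_vectors U V r u v" and "i < r" and "subspace U" "subspace V"
    and "x \<in> U" "y \<in> V" and orth: "\<And>j. j < i \<Longrightarrow> x \<bullet> u j = 0 \<and> y \<bullet> v j = 0"
  shows "\<bar>x \<bullet> y\<bar> \<le> \<bar>u i \<bullet> v i\<bar> * (norm x * norm y)"
proof (cases "x = 0 \<or> y = 0")
  case False
  let ?x = "(1 / norm x) *\<^sub>R x" and ?y = "(1 / norm y) *\<^sub>R y"
  have "\<bar>?x \<bullet> ?y\<bar> \<le> \<bar>u i \<bullet> v i\<bar>"
    using False assms(3-6) orth by (intro principal_vectors_max[OF pv \<open>i < r\<close>]) (simp_all add: subspace_scale)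
  then show ?thesis
    using False by (simp add: abs_mult field_simps)
qed auto

lemma principal_vectors_parallel:
  assumes pv: "principal_vectors U V r u v" and "i < r" and one: "\<bar>u i \<bullet> v i\<bar> = 1"
  shows "v i = u i \<or> v i = - u i"
proof -
  have unit: "u i \<bullet> u i = 1" "v i \<bullet> v i = 1"
    using principal_vectorsD[OF pv \<open>i < r\<close>] by (simp_all add: norm_eq_1)
  show ?thesis
  proof (cases "u i \<bullet> v i = 1")
    case True
    then have "(v i - u i) \<bullet> (v i - u i) = 0"
      using unit by (simp add: inner_diff_left inner_diff_right inner_commute)
    then show ?thesis by simp
  next
    case False
    then have "(v i + u i) \<bullet> (v i + u i) = 0"
      using unit one by (simp add: inner_add_left inner_add_right inner_commute abs_if split: if_splits)
    then show ?thesis by (simp add: add_eq_0_iff)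
  qed
qed

lemma principal_vector_stationary:
  fixes U V :: "'a::real_inner set"
  assumes pv: "principal_vectors U V r u v" and i: "i < r" and "subspace U" "subspace V"
    and h: "h \<in> U" "\<And>j. j \<le> i \<Longrightarrow> h \<bullet> u j = 0"
  shows "h \<bullet> v i = 0"
proof -
  note pvi = principal_vectorsD[OF pv i]
  define L where "L y = (y \<bullet> v i) *\<^sub>R v i" for y
  have L: "linear L"
    by (rule linearI) (simp_all add: L_def inner_add_left scaleR_add_left)
  have norm_L: "norm (L y) = \<bar>y \<bullet> v i\<bar>" for y
    using pvi by (simp add: L_def)
  have bound: "\<bar>y \<bullet> v i\<bar> \<le> \<bar>u i \<bullet> v i\<bar> * norm y"
    if "y \<in> U" "\<And>j. j < i \<Longrightarrow> y \<bullet> u j = 0" for y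
    using principal_vectors_inner_le[OF pv i assms(3,4) that(1) pvi(2)] that(2) pvi by simp
  have "L (u i) \<bullet> L h = 0"
  proof (rule linear_maximizer_orthogonal[OF L pvi(3)])
    show "u i \<bullet> h = 0"
      using h(2)[of i] by (simp add: inner_commute)
    fix t
    show "norm (L (u i + t *\<^sub>R h)) \<le> norm (L (u i)) * norm (u i + t *\<^sub>R h)"
      unfolding norm_L using h pvi \<open>subspace U\<close>
      by (intro bound) (auto simp: subspace_add subspace_scale inner_add_left)
  qed
  moreover have "L (u i) \<bullet> L h = (u i \<bullet> v i) * (h \<bullet> v i)"
    using pvi by (simp add: L_def norm_eq_1)
  moreover have "h \<bullet> v i = 0" if "u i \<bullet> v i = 0"
    using bound[of h] h that by simp
  ultimately show ?thesis
    by auto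
qed

lemma friedrichs_index:
  assumes pv: "principal_vectors U V r u v" and nz: "\<exists>i<r. arccos \<bar>u i \<bullet> v i\<bar> \<noteq> 0"
  obtains i0 where "i0 < r" "\<And>j. j < i0 \<Longrightarrow> \<bar>u j \<bullet> v j\<bar> = 1" "\<bar>u i0 \<bullet> v i0\<bar> < 1"
    "cos (Min {arccos \<bar>u i \<bullet> v i\<bar> | i. i < r \<and> arccos \<bar>u i \<bullet> v i\<bar> \<noteq> 0}) = \<bar>u i0 \<bullet> v i0\<bar>"
proof -
  define c where "c i = \<bar>u i \<bullet> v i\<bar>" for i
  have c_le: "c i \<le> 1" if "i < r" for i
    using principal_cos_le_1[OF pv that] by (simp add: c_def)
  have arccos_eq_0: "arccos (c i) = 0 \<longleftrightarrow> c i = 1" if "i < r" for i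
  proof
    assume "arccos (c i) = 0"
    then show "c i = 1"
      using c_le[OF that] cos_arccos[of "c i"] by (simp add: c_def)
  qed simp
  define P where "P i \<longleftrightarrow> i < r \<and> c i \<noteq> 1" for i
  define i0 where "i0 = (LEAST i. P i)"
  obtain i where "i < r" "arccos (c i) \<noteq> 0"
    using nz by (auto simp: c_def)
  then have "P i"
    using arccos_eq_0 by (simp add: P_def)
  then have "P i0"
    unfolding i0_def by (rule LeastI)
  then have i0: "i0 < r" "c i0 < 1"
    using c_le by (auto simp: P_def order_less_le)
  have before: "c j = 1" if "j < i0" for j
    using not_less_Least[of j P] that i0 by (auto simp: P_def i0_def)
  have "{arccos \<bar>u i \<bullet> v i\<bar> | i. i < r \<and> arccos \<bar>u i \<bullet> v i\<bar> \<noteq> 0} = (\<lambda>i. arccos (c i)) ` Collect P"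
    using arccos_eq_0 by (auto simp: P_def c_def)
  moreover have "Min ((\<lambda>i. arccos (c i)) ` Collect P) = arccos (c i0)"
  proof (rule Min_eqI)
    show "finite ((\<lambda>i. arccos (c i)) ` Collect P)"
      by (rule finite_imageI, rule finite_subset[of _ "{..<r}"]) (auto simp: P_def)
    show "arccos (c i0) \<in> (\<lambda>i. arccos (c i)) ` Collect P"
      using \<open>P i0\<close> by blast
    fix y assume "y \<in> (\<lambda>i. arccos (c i)) ` Collect P"
    then obtain i where "P i" "y = arccos (c i)"
      by blast
    moreover have "c i \<le> c i0"
      using principal_cos_antimono[OF pv Least_le[of P, OF \<open>P i\<close>]] \<open>P i\<close>
      by (simp add: P_def c_def i0_def)
    moreover have "-1 \<le> c i"
      by (simp add: c_def)
    ultimately show "arccos (c i0) \<le> y"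
      using i0 by (simp add: arccos_le_arccos)
  qed
  ultimately show ?thesis
    using that i0 before c_le by (simp add: c_def)
qed

section \<open>Alternating projections onto two null spaces\<close>

lemma funpow_alternating_eigen:
  assumes "linear p1" "linear p2" "p1 x = x" "p1 (p2 x) = a *\<^sub>R x"
  shows "((p2 \<circ> p1) ^^ Suc k) x = a ^ k *\<^sub>R p2 x"
proof (induction k)
  case (Suc k)
  then show ?case
    using assms by (simp add: linear_scale)
qed (use assms in simp)

lemma orth_proj_maximizer_eigen:
  fixes N1 N2 :: "'a::euclidean_space set"
  assumes N1: "subspace N1" and N2: "subspace N2"
    and z: "z \<in> N1" "z \<in> (N1 \<inter> N2)\<^sup>\<bottom>" "norm z = 1"
    and max: "\<And>y. y \<in> N1 \<Longrightarrow> y \<in> (N1 \<inter> N2)\<^sup>\<bottom> \<Longrightarrow>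
                 norm (orth_proj N2 y) \<le> norm (orth_proj N2 z) * norm y"
  shows "orth_proj N1 (orth_proj N2 z) = (norm (orth_proj N2 z))\<^sup>2 *\<^sub>R z"
proof -
  let ?P = "orth_proj N2 z"
  define d where "d = orth_proj N1 ?P - (norm ?P)\<^sup>2 *\<^sub>R z"
  have W: "subspace (N1 \<inter> (N1 \<inter> N2)\<^sup>\<bottom>)"
    by (intro subspace_inter N1 subspace_orthogonal_comp)
  have "?P \<in> (N1 \<inter> N2)\<^sup>\<bottom>"
    using z by (intro orth_proj_preserves_orthogonal_comp[OF N2]) auto
  then have "orth_proj N1 ?P \<in> (N1 \<inter> N2)\<^sup>\<bottom>"
    by (intro orth_proj_preserves_orthogonal_comp[OF N1]) auto
  then have d: "d \<in> N1 \<inter> (N1 \<inter> N2)\<^sup>\<bottom>"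
    unfolding d_def using W z orth_proj_in[OF N1] by (intro subspace_diff subspace_scale) auto
  have "orth_proj N1 ?P \<bullet> z = ?P \<bullet> z"
    using orth_proj_self_adjoint[OF N1, of ?P z] orth_proj_id[OF N1 z(1)] by simp
  also have "\<dots> = (norm ?P)\<^sup>2"
    using inner_orth_proj_self[OF N2, of z] by (simp add: power2_norm_eq_inner inner_commute)
  finally have dz: "z \<bullet> d = 0"
    using z(3) by (simp add: d_def inner_diff_right inner_commute norm_eq_1)
  have "?P \<bullet> orth_proj N2 d = 0"
  proof (rule linear_maximizer_orthogonal[OF linear_orth_proj[OF N2] z(3) dz])
    fix t :: real
    have "z + t *\<^sub>R d \<in> N1 \<inter> (N1 \<inter> N2)\<^sup>\<bottom>"
      using z d by (intro subspace_add[OF W] subspace_scale[OF W]) auto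
    then show "norm (orth_proj N2 (z + t *\<^sub>R d)) \<le> norm ?P * norm (z + t *\<^sub>R d)"
      by (intro max) auto
  qed
  then have Pd: "?P \<bullet> d = 0"
    using orth_proj_self_adjoint[OF N2, of ?P d] orth_proj_id[OF N2 orth_proj_in[OF N2]] by simp
  have "d \<bullet> d = ?P \<bullet> orth_proj N1 d - (norm ?P)\<^sup>2 * (z \<bullet> d)"
    using orth_proj_self_adjoint[OF N1, of ?P d] by (simp add: d_def inner_diff_left)
  also have "\<dots> = 0"
    using Pd dz orth_proj_id[OF N1] d by simp
  finally show ?thesis
    by (simp add: d_def)
qed

text \<open>The index \<open>i0\<close> is that of the Friedrichs angle: all earlier principal angles are zero.\<close>

locale friedrichs_angle =
  fixes U V :: "'a::euclidean_space set" and r :: nat and u v :: "nat \<Rightarrow> 'a" and i0 :: nat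
  assumes subspace_U: "subspace U" and subspace_V: "subspace V"
    and principal: "principal_vectors U V r u v" and i0: "i0 < r"
    and parallel_before: "\<And>j. j < i0 \<Longrightarrow> \<bar>u j \<bullet> v j\<bar> = 1"
begin

lemma swap: "friedrichs_angle V U r v u i0"
  using subspace_U subspace_V principal_vectors_swap[OF principal] i0 parallel_before
  by unfold_locales (auto simp: inner_commute)

lemma principal_before:
  assumes "j < i0"
  shows "u j \<in> U \<inter> V" "v j \<in> U \<inter> V" "u i0 \<bullet> u j = 0" "v i0 \<bullet> u j = 0"
proof -
  have j: "j < r"
    using assms i0 by simp
  have "v j = u j \<or> v j = - u j"
    by (rule principal_vectors_parallel[OF principal j parallel_before[OF assms]])
  moreover have "v i0 \<bullet> v j = 0"
    using principal_vectorsD(6)[OF principal i0 assms] .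
  ultimately show "v i0 \<bullet> u j = 0"
    by auto
  show "u j \<in> U \<inter> V" "v j \<in> U \<inter> V" "u i0 \<bullet> u j = 0"
    using \<open>v j = u j \<or> v j = - u j\<close> principal_vectorsD[OF principal j]
      principal_vectorsD(5)[OF principal i0 assms] subspace_U subspace_V
    by (auto dest: subspace_neg)
qed

lemma orth_proj_principal_vector: "orth_proj U (v i0) = (u i0 \<bullet> v i0) *\<^sub>R u i0"
proof -
  note pv = principal_vectorsD[OF principal i0]
  define g where "g = orth_proj U (v i0) - (u i0 \<bullet> v i0) *\<^sub>R u i0"
  have g: "g \<in> U"
    using orth_proj_in[OF subspace_U] pv subspace_U by (simp add: g_def subspace_diff subspace_scale)
  have proj_u: "orth_proj U (v i0) \<bullet> u j = v i0 \<bullet> u j" if "j \<le> i0" for j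
    using that orth_proj_self_adjoint[OF subspace_U] orth_proj_id[OF subspace_U]
      principal_before(1) pv(1) by (metis IntD1 le_neq_implies_less)
  have g_u: "g \<bullet> u j = 0" if "j \<le> i0" for j
  proof (cases "j = i0")
    case True
    then show ?thesis
      using proj_u[of i0] pv inner_commute[of "v i0" "u i0"] by (simp add: g_def inner_diff_left norm_eq_1)
  next
    case False
    then show ?thesis
      using that proj_u[of j] principal_before(3,4)[of j] by (simp add: g_def inner_diff_left)
  qed
  have "g \<bullet> v i0 = 0"
    using principal_vector_stationary[OF principal i0 subspace_U subspace_V g g_u] .
  moreover have "g \<bullet> orth_proj U (v i0) = g \<bullet> v i0"
    using orth_proj_self_adjoint[OF subspace_U, of g "v i0"] orth_proj_id[OF subspace_U g] by simp
  ultimately have "g \<bullet> g = 0"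
    using g_u[of i0] by (simp add: g_def inner_diff_right)
  then show ?thesis
    by (simp add: g_def)
qed

lemma inner_sq_le_cos_sq:
  assumes "x \<in> U" "y \<in> V" "x \<in> (U \<inter> V)\<^sup>\<bottom>" "y \<in> (U \<inter> V)\<^sup>\<bottom>"
  shows "(x \<bullet> y)\<^sup>2 \<le> (u i0 \<bullet> v i0)\<^sup>2 * ((x \<bullet> x) * (y \<bullet> y))"
proof -
  have "x \<bullet> u j = 0 \<and> y \<bullet> v j = 0" if "j < i0" for j
    using assms(3,4) principal_before(1,2)[OF that] by (auto simp: orthogonal_comp_iff inner_commute)
  then have "\<bar>x \<bullet> y\<bar> \<le> \<bar>u i0 \<bullet> v i0\<bar> * (norm x * norm y)"
    using assms(1,2) by (intro principal_vectors_inner_le[OF principal i0 subspace_U subspace_V])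
  then have "\<bar>x \<bullet> y\<bar>\<^sup>2 \<le> (\<bar>u i0 \<bullet> v i0\<bar> * (norm x * norm y))\<^sup>2"
    by (rule power_mono) simp
  then show ?thesis
    by (simp add: power_mult_distrib power2_norm_eq_inner)
qed

lemma eigenvalue_le_cos:
  assumes z: "z \<in> U\<^sup>\<bottom>" "z \<in> (U\<^sup>\<bottom> \<inter> V\<^sup>\<bottom>)\<^sup>\<bottom>" "norm z = 1"
    and eig: "orth_proj (U\<^sup>\<bottom>) (orth_proj (V\<^sup>\<bottom>) z) = (norm (orth_proj (V\<^sup>\<bottom>) z))\<^sup>2 *\<^sub>R z"
  shows "(norm (orth_proj (V\<^sup>\<bottom>) z))\<^sup>2 \<le> (u i0 \<bullet> v i0)\<^sup>2"
proof -
  have N2: "subspace (V\<^sup>\<bottom>)"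
    by (simp add: subspace_orthogonal_comp)
  define P where "P = orth_proj (V\<^sup>\<bottom>) z"
  define A where "A = (norm P)\<^sup>2"
  have zz: "z \<bullet> z = 1" and PP: "P \<bullet> P = A" and zP: "z \<bullet> P = A" "P \<bullet> z = A"
    using z(3) inner_orth_proj_self[OF N2, of z]
    by (simp_all add: P_def A_def power2_norm_eq_inner norm_eq_1 inner_commute)
  have "z \<notin> V\<^sup>\<bottom>"
  proof
    assume "z \<in> V\<^sup>\<bottom>"
    then have "z \<bullet> z = 0"
      using z(1,2) by (simp add: orthogonal_comp_iff)
    then show False
      using zz by simp
  qed
  then have "A < 1"
    using norm_orth_proj_less[OF N2 \<open>z \<notin> V\<^sup>\<bottom>\<close>] z(3) by (simp add: A_def P_def power_less_one_iff)
  define u' where "u' = orth_proj U P"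
  define v' where "v' = orth_proj V z"
  have u'_eq: "u' = P - A *\<^sub>R z"
    using orth_proj_orthogonal_comp[OF subspace_U, of P] eig by (simp add: u'_def P_def A_def)
  have v'_eq: "v' = z - P"
    using orth_proj_orthogonal_comp[OF subspace_V, of z] by (simp add: v'_def P_def)
  have "P \<in> (U \<inter> V)\<^sup>\<bottom>" "z \<in> (U \<inter> V)\<^sup>\<bottom>"
    using orth_proj_in[OF N2, of z] z(1) orthogonal_comp_anti_mono[of "U \<inter> V"] by (auto simp: P_def)
  then have "u' \<in> (U \<inter> V)\<^sup>\<bottom>" "v' \<in> (U \<inter> V)\<^sup>\<bottom>"
    unfolding u'_def v'_def
    by (simp_all add: orth_proj_preserves_orthogonal_comp subspace_U subspace_V)
  then have "(u' \<bullet> v')\<^sup>2 \<le> (u i0 \<bullet> v i0)\<^sup>2 * ((u' \<bullet> u') * (v' \<bullet> v'))"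
    using orth_proj_in[OF subspace_U] orth_proj_in[OF subspace_V]
    by (intro inner_sq_le_cos_sq) (auto simp: u'_def v'_def)
  moreover have "u' \<bullet> v' = A * A - A" "u' \<bullet> u' = A - A * A" "v' \<bullet> v' = 1 - A"
    unfolding u'_eq v'_eq using zz PP zP by (simp_all add: inner_diff_left inner_diff_right algebra_simps)
  ultimately have le: "A * (1 - A)\<^sup>2 * A \<le> A * (1 - A)\<^sup>2 * (u i0 \<bullet> v i0)\<^sup>2"
    by (simp add: power2_eq_square algebra_simps)
  have "A \<le> (u i0 \<bullet> v i0)\<^sup>2"
  proof (cases "A = 0")
    case False
    then have "0 < A * (1 - A)\<^sup>2"
      using \<open>A < 1\<close> by (simp add: A_def)
    then show ?thesis
      using le by (rule mult_left_le_imp_le[rotated])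
  qed simp
  then show ?thesis
    by (simp add: A_def P_def)
qed

lemma norm_orth_proj_le_cos:
  assumes x: "x \<in> U\<^sup>\<bottom>" "x \<in> (U\<^sup>\<bottom> \<inter> V\<^sup>\<bottom>)\<^sup>\<bottom>"
  shows "norm (orth_proj (V\<^sup>\<bottom>) x) \<le> \<bar>u i0 \<bullet> v i0\<bar> * norm x"
proof (cases "x = 0")
  case False
  have N1: "subspace (U\<^sup>\<bottom>)" and N2: "subspace (V\<^sup>\<bottom>)"
    by (simp_all add: subspace_orthogonal_comp)
  have W: "subspace (U\<^sup>\<bottom> \<inter> (U\<^sup>\<bottom> \<inter> V\<^sup>\<bottom>)\<^sup>\<bottom>)"
    by (intro subspace_inter subspace_orthogonal_comp)
  obtain z where z: "z \<in> U\<^sup>\<bottom> \<inter> (U\<^sup>\<bottom> \<inter> V\<^sup>\<bottom>)\<^sup>\<bottom>" "norm z = 1"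
    and max: "\<And>y. y \<in> U\<^sup>\<bottom> \<inter> (U\<^sup>\<bottom> \<inter> V\<^sup>\<bottom>)\<^sup>\<bottom> \<Longrightarrow>
                 norm (orth_proj (V\<^sup>\<bottom>) y) \<le> norm (orth_proj (V\<^sup>\<bottom>) z) * norm y"
    using linear_attains_max_ratio[OF linear_orth_proj[OF N2] W, of x] x False by auto
  have "orth_proj (U\<^sup>\<bottom>) (orth_proj (V\<^sup>\<bottom>) z) = (norm (orth_proj (V\<^sup>\<bottom>) z))\<^sup>2 *\<^sub>R z"
    using z max by (intro orth_proj_maximizer_eigen[OF N1 N2]) auto
  then have "(norm (orth_proj (V\<^sup>\<bottom>) z))\<^sup>2 \<le> \<bar>u i0 \<bullet> v i0\<bar>\<^sup>2"
    using z by (simp add: eigenvalue_le_cos)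
  then have "norm (orth_proj (V\<^sup>\<bottom>) z) \<le> \<bar>u i0 \<bullet> v i0\<bar>"
    by (rule power2_le_imp_le) simp
  then show ?thesis
    using max[of x] x by (simp add: mult_right_mono order_trans)
qed (simp add: linear_0[OF linear_orth_proj] subspace_orthogonal_comp)

lemma friedrichs_eigenvector:
  assumes lt: "\<bar>u i0 \<bullet> v i0\<bar> < 1"
  obtains x where "x \<in> U\<^sup>\<bottom>" "x \<in> (U\<^sup>\<bottom> \<inter> V\<^sup>\<bottom>)\<^sup>\<bottom>" "x \<noteq> 0" "norm x \<le> 1"
    "orth_proj (U\<^sup>\<bottom>) (orth_proj (V\<^sup>\<bottom>) x) = (u i0 \<bullet> v i0)\<^sup>2 *\<^sub>R x"
    "(norm (orth_proj (V\<^sup>\<bottom>) x))\<^sup>2 = (u i0 \<bullet> v i0)\<^sup>2 * (norm x)\<^sup>2"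
proof -
  interpret swapped: friedrichs_angle V U r v u i0
    by (rule swap)
  note pv = principal_vectorsD[OF principal i0]
  define s where "s = u i0 \<bullet> v i0"
  have N1: "subspace (U\<^sup>\<bottom>)" and N2: "subspace (V\<^sup>\<bottom>)"
    by (simp_all add: subspace_orthogonal_comp)
  have p1v: "orth_proj (U\<^sup>\<bottom>) (v i0) = v i0 - s *\<^sub>R u i0"
    using orth_proj_orthogonal_comp[OF subspace_U] orth_proj_principal_vector by (simp add: s_def)
  have p2u: "orth_proj (V\<^sup>\<bottom>) (u i0) = u i0 - s *\<^sub>R v i0"
    using orth_proj_orthogonal_comp[OF subspace_V] swapped.orth_proj_principal_vector
    by (simp add: s_def inner_commute)
  have p1u: "orth_proj (U\<^sup>\<bottom>) (u i0) = 0"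
    using pv orthogonal_comp_self[OF subspace_U] by (intro orth_proj_eq_0[OF N1]) auto
  have p2v: "orth_proj (V\<^sup>\<bottom>) (v i0) = 0"
    using pv orthogonal_comp_self[OF subspace_V] by (intro orth_proj_eq_0[OF N2]) auto
  define x where "x = v i0 - s *\<^sub>R u i0"
  have p2x: "orth_proj (V\<^sup>\<bottom>) x = s\<^sup>2 *\<^sub>R v i0 - s *\<^sub>R u i0"
    unfolding x_def linear_diff[OF linear_orth_proj[OF N2]] linear_scale[OF linear_orth_proj[OF N2]]
      p2u p2v by (simp add: algebra_simps power2_eq_square)
  have unit: "u i0 \<bullet> u i0 = 1" "v i0 \<bullet> v i0 = 1" "v i0 \<bullet> u i0 = s"
    using pv by (simp_all add: norm_eq_1 s_def inner_commute)
  have xx: "(norm x)\<^sup>2 = 1 - s\<^sup>2"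
    using unit unfolding power2_norm_eq_inner
    by (simp add: x_def inner_diff_left inner_diff_right inner_commute power2_eq_square)
  show ?thesis
  proof
    show "x \<in> U\<^sup>\<bottom>"
      using orth_proj_in[OF N1, of "v i0"] p1v by (simp add: x_def)
    show "x \<in> (U\<^sup>\<bottom> \<inter> V\<^sup>\<bottom>)\<^sup>\<bottom>"
      using pv by (auto simp: x_def orthogonal_comp_iff inner_diff_right inner_commute)
    have "s\<^sup>2 < 1"
      using lt by (simp add: s_def abs_square_less_1)
    then show "x \<noteq> 0"
      using xx by auto
    show "norm x \<le> 1"
      using xx power2_le_imp_le[of "norm x" 1] by simp
    show "orth_proj (U\<^sup>\<bottom>) (orth_proj (V\<^sup>\<bottom>) x) = (u i0 \<bullet> v i0)\<^sup>2 *\<^sub>R x"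
      unfolding p2x linear_diff[OF linear_orth_proj[OF N1]] linear_scale[OF linear_orth_proj[OF N1]]
        p1v p1u by (simp add: x_def s_def algebra_simps)
    show "(norm (orth_proj (V\<^sup>\<bottom>) x))\<^sup>2 = (u i0 \<bullet> v i0)\<^sup>2 * (norm x)\<^sup>2"
      unfolding p2x s_def[symmetric] xx unfolding power2_norm_eq_inner using unit
      by (simp add: inner_diff_left inner_diff_right inner_commute
          power2_eq_square algebra_simps)
  qed
qed

lemma alternating_orth_proj_bound:
  assumes x: "x \<in> (U\<^sup>\<bottom> \<inter> V\<^sup>\<bottom>)\<^sup>\<bottom>"
  shows "norm (((orth_proj (V\<^sup>\<bottom>) \<circ> orth_proj (U\<^sup>\<bottom>)) ^^ Suc k) x)
           \<le> \<bar>u i0 \<bullet> v i0\<bar> ^ (2 * k + 1) * norm x"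
proof -
  interpret swapped: friedrichs_angle V U r v u i0
    by (rule swap)
  let ?c = "\<bar>u i0 \<bullet> v i0\<bar>" and ?M = "U\<^sup>\<bottom> \<inter> V\<^sup>\<bottom>"
  let ?p1 = "orth_proj (U\<^sup>\<bottom>)" and ?p2 = "orth_proj (V\<^sup>\<bottom>)"
  have N1: "subspace (U\<^sup>\<bottom>)" and N2: "subspace (V\<^sup>\<bottom>)"
    by (simp_all add: subspace_orthogonal_comp)
  have p1_M: "?p1 y \<in> ?M\<^sup>\<bottom>" and p2_M: "?p2 y \<in> ?M\<^sup>\<bottom>" if "y \<in> ?M\<^sup>\<bottom>" for y
    using that by (auto intro!: orth_proj_preserves_orthogonal_comp N1 N2)
  have first_step: "norm (?p2 (?p1 y)) \<le> ?c * norm y" if "y \<in> ?M\<^sup>\<bottom>" for y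
    using norm_orth_proj_le_cos[OF orth_proj_in[OF N1] p1_M[OF that]]
      norm_orth_proj_le[OF N1, of y] by (simp add: mult_left_mono order_trans)
  have swapped_step: "norm (?p1 y) \<le> ?c * norm y" if "y \<in> V\<^sup>\<bottom>" "y \<in> ?M\<^sup>\<bottom>" for y
    using swapped.norm_orth_proj_le_cos[of y] that by (simp add: Int_commute inner_commute)
  define T where "T = ?p2 \<circ> ?p1"
  have T_M: "(T ^^ k) x \<in> ?M\<^sup>\<bottom>" for k
    by (induction k) (simp_all add: T_def x p1_M p2_M)
  have "norm ((T ^^ Suc k) x) \<le> ?c ^ (2 * k + 1) * norm x"
  proof (induction k)
    case 0
    then show ?case
      using first_step[OF x] by (simp add: T_def)
  next
    case (Suc k)
    let ?y = "(T ^^ Suc k) x"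
    have "?y \<in> V\<^sup>\<bottom>"
      using orth_proj_in[OF N2] by (simp add: T_def)
    have "norm ((T ^^ Suc (Suc k)) x) = norm (?p2 (?p1 ?y))"
      by (simp add: T_def)
    also have "\<dots> \<le> ?c * norm (?p1 ?y)"
      using norm_orth_proj_le_cos[OF orth_proj_in[OF N1] p1_M[OF T_M]] .
    also have "\<dots> \<le> ?c * (?c * norm ?y)"
      using swapped_step[OF \<open>?y \<in> V\<^sup>\<bottom>\<close> T_M] by (intro mult_left_mono) simp_all
    also have "\<dots> \<le> ?c * (?c * (?c ^ (2 * k + 1) * norm x))"
      using Suc.IH by (intro mult_left_mono) simp_all
    finally show ?case
      by (simp add: algebra_simps)
  qed
  then show ?thesis
    unfolding T_def .
qed

end

section \<open>The pseudoinverse and the cyclic iteration\<close>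

lemma subspace_row_range: "subspace (row_range X)"
  unfolding row_range_def by (rule linear_subspace_image) (auto simp: subspace_UNIV)

lemma inner_transpose_matrix_vector:
  fixes X :: "real^'n^'m"
  shows "(transpose X *v z) \<bullet> x = z \<bullet> (X *v x)"
  unfolding transpose_matrix_vector by (rule dot_lmul_matrix)

lemma matrix_vector_mult_eq_0_iff_orthogonal_row_range:
  "X *v x = 0 \<longleftrightarrow> x \<in> (row_range X)\<^sup>\<bottom>"
proof
  assume "x \<in> (row_range X)\<^sup>\<bottom>"
  then have "(transpose X *v (X *v x)) \<bullet> x = 0"
    by (auto simp: orthogonal_comp_iff row_range_def)
  then show "X *v x = 0"
    unfolding inner_transpose_matrix_vector by simp
next
  assume "X *v x = 0"
  then show "x \<in> (row_range X)\<^sup>\<bottom>"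
    by (auto simp: orthogonal_comp_iff row_range_def inner_transpose_matrix_vector simp del: transpose_matrix_vector)
qed

lemma transpose_eq_if_self_adjoint:
  fixes A :: "real^'n^'n"
  assumes "\<And>x y. (A *v x) \<bullet> y = x \<bullet> (A *v y)"
  shows "transpose A = A"
proof -
  have "(\<lambda>x. transpose A *v x) = (\<lambda>x. A *v x)"
    using adjoint_matrix[of A] adjoint_unique[of "(*v) A" "(*v) A"] assms by simp
  then show ?thesis
    by (simp add: matrix_eq fun_eq_iff)
qed

definition penrose_inverse :: "real^'d^'n \<Rightarrow> real^'n^'d \<Rightarrow> bool" where
  "penrose_inverse A B \<longleftrightarrow> A ** B ** A = A \<and> B ** A ** B = B \<and>
     transpose (A ** B) = A ** B \<and> transpose (B ** A) = B ** A"

lemma penrose_inverse_unique: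
  assumes B: "penrose_inverse A B" and C: "penrose_inverse A C"
  shows "B = C"
proof -
  from B have B1: "A ** B ** A = A" and B2: "B ** A ** B = B"
    and B3: "transpose (A ** B) = A ** B" and B4: "transpose (B ** A) = B ** A"
    by (simp_all add: penrose_inverse_def)
  from C have C1: "A ** C ** A = A" and C3: "transpose (A ** C) = A ** C"
    and C4: "transpose (C ** A) = C ** A"
    by (simp_all add: penrose_inverse_def)
  have AB: "A ** B = A ** C"
  proof -
    have "A ** B = transpose (A ** C ** A ** B)"
      using B3 C1 by (simp add: matrix_mul_assoc)
    also have "\<dots> = transpose (A ** B) ** transpose (A ** C)"
      by (simp add: matrix_transpose_mul matrix_mul_assoc)
    also have "\<dots> = A ** C"
      using B1 B3 C3 by (simp add: matrix_mul_assoc)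
    finally show ?thesis .
  qed
  have BA: "B ** A = C ** A"
  proof -
    have "B ** A ** C ** A = B ** A"
      using C1 by (metis matrix_mul_assoc)
    then have "B ** A = transpose (B ** A ** C ** A)"
      using B4 by simp
    also have "\<dots> = transpose (C ** A) ** transpose (B ** A)"
      by (simp add: matrix_transpose_mul matrix_mul_assoc)
    also have "\<dots> = C ** A ** B ** A"
      using B4 C4 by (simp add: matrix_mul_assoc)
    also have "\<dots> = C ** A"
      using B1 by (metis matrix_mul_assoc)
    finally show ?thesis .
  qed
  have "B = B ** A ** B"
    using B2 by simp
  also have "\<dots> = C ** A ** C"
    by (metis AB BA matrix_mul_assoc)
  also have "\<dots> = C"
    using C by (simp add: penrose_inverse_def)
  finally show ?thesis .
qed

lemma penrose_inverse_exists:
  fixes X :: "real^'d^'n"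
  shows "\<exists>B. penrose_inverse X B"
proof -
  let ?R = "row_range X" and ?C = "range (\<lambda>x. X *v x)"
  have R: "subspace ?R" and C: "subspace ?C"
    by (simp_all add: subspace_row_range linear_subspace_image subspace_UNIV)
  have X_proj: "X *v orth_proj ?R x = X *v x" for x
  proof -
    have "x - orth_proj ?R x \<in> ?R\<^sup>\<bottom>"
      by (rule orth_proj_residual[OF R])
    then show ?thesis
      by (simp add: matrix_vector_mult_eq_0_iff_orthogonal_row_range[symmetric]
          matrix_vector_mult_diff_distrib)
  qed
  have "inj_on (\<lambda>x. X *v x) ?R"
  proof (rule inj_onI)
    fix r1 r2 assume r: "r1 \<in> ?R" "r2 \<in> ?R" "X *v r1 = X *v r2"
    then have "r1 - r2 \<in> ?R \<inter> ?R\<^sup>\<bottom>"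
      using R by (simp add: subspace_diff matrix_vector_mult_eq_0_iff_orthogonal_row_range[symmetric]
          matrix_vector_mult_diff_distrib)
    then show "r1 = r2"
      using orthogonal_Int_0[OF R] by auto
  qed
  then obtain g where g_R: "range g \<subseteq> ?R" and g: "linear g" and g_X: "\<And>r. r \<in> ?R \<Longrightarrow> g (X *v r) = r"
    using linear_exists_left_inverse_on[OF matrix_vector_mul_linear R] by blast
  have g_X_proj: "g (X *v x) = orth_proj ?R x" for x
    using g_X[OF orth_proj_in[OF R]] X_proj by simp
  define B where "B = matrix (g \<circ> orth_proj ?C)"
  have B: "B *v z = g (orth_proj ?C z)" for z
    unfolding B_def using matrix_vector_mul(2)[OF linear_compose[OF linear_orth_proj[OF C] g]] by simp
  have XB: "X *v (B *v z) = orth_proj ?C z" for z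
  proof -
    obtain x where "orth_proj ?C z = X *v x"
      using orth_proj_in[OF C, of z] by auto
    then show ?thesis
      by (simp add: B g_X_proj X_proj)
  qed
  have BX: "B *v (X *v x) = orth_proj ?R x" for x
    by (simp add: B orth_proj_id[OF C] g_X_proj)
  have "penrose_inverse X B"
    unfolding penrose_inverse_def
  proof (intro conjI)
    show "X ** B ** X = X"
      by (simp add: matrix_eq matrix_vector_mul_assoc[symmetric] BX X_proj)
    have "B *v z \<in> ?R" for z
      using g_R by (auto simp: B)
    then show "B ** X ** B = B"
      by (simp add: matrix_eq matrix_vector_mul_assoc[symmetric] BX orth_proj_id[OF R])
    show "transpose (X ** B) = X ** B"
      by (rule transpose_eq_if_self_adjoint)
         (simp add: matrix_vector_mul_assoc[symmetric] XB orth_proj_self_adjoint[OF C])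
    show "transpose (B ** X) = B ** X"
      by (rule transpose_eq_if_self_adjoint)
         (simp add: matrix_vector_mul_assoc[symmetric] BX orth_proj_self_adjoint[OF R])
  qed
  then show ?thesis ..
qed

lemma pinv_penrose_inverse: "penrose_inverse X (pinv X)"
proof -
  have "pinv X = (THE B. penrose_inverse X B)"
    by (simp add: pinv_def penrose_inverse_def)
  then show ?thesis
    using theI'[of "penrose_inverse X"] penrose_inverse_exists penrose_inverse_unique by metis
qed

lemma proj_step_error:
  fixes X :: "real^'d^'n"
  assumes "X *v w = y"
  shows "proj_step X y z - w = orth_proj ((row_range X)\<^sup>\<bottom>) (z - w)"
proof -
  define e where "e = z - w"
  have P: "penrose_inverse X (pinv X)"
    by (rule pinv_penrose_inverse)
  have "X *v (e - pinv X *v (X *v e)) = 0"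
    using P by (simp add: penrose_inverse_def matrix_vector_mult_diff_distrib
        matrix_vector_mul_assoc matrix_mul_assoc)
  moreover have "pinv X ** X = transpose X ** transpose (pinv X)"
    using P matrix_transpose_mul[of "pinv X" X] unfolding penrose_inverse_def by metis
  then have "pinv X *v (X *v e) = transpose X *v (transpose (pinv X) *v e)"
    by (simp only: matrix_vector_mul_assoc)
  then have "pinv X *v (X *v e) \<in> row_range X"
    unfolding row_range_def by (metis rangeI)
  then have "e - (e - pinv X *v (X *v e)) \<in> (row_range X)\<^sup>\<bottom>\<^sup>\<bottom>"
    using orthogonal_comp_self[OF subspace_row_range[of X]] by simp
  ultimately have "orth_proj ((row_range X)\<^sup>\<bottom>) e = e - pinv X *v (X *v e)"
    by (intro orth_proj_eqI[OF subspace_orthogonal_comp])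
       (simp_all add: matrix_vector_mult_eq_0_iff_orthogonal_row_range)
  then show ?thesis
    using assms by (simp add: e_def proj_step_def matrix_vector_mult_diff_distrib algebra_simps)
qed

lemma cyc_iter_error:
  assumes "X1 *v w = y1" "X2 *v w = y2"
  shows "cyc_iter X1 y1 X2 y2 (2 * k) - w =
           ((orth_proj ((row_range X2)\<^sup>\<bottom>) \<circ> orth_proj ((row_range X1)\<^sup>\<bottom>)) ^^ k) (- w)"
proof (induction k)
  case (Suc k)
  have "cyc_iter X1 y1 X2 y2 (2 * Suc k) - w =
          proj_step X2 y2 (proj_step X1 y1 (cyc_iter X1 y1 X2 y2 (2 * k))) - w"
    by simp
  also have "\<dots> = orth_proj ((row_range X2)\<^sup>\<bottom>)
                     (orth_proj ((row_range X1)\<^sup>\<bottom>) (cyc_iter X1 y1 X2 y2 (2 * k) - w))"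
    unfolding proj_step_error[OF assms(2)] proj_step_error[OF assms(1)] ..
  finally show ?case
    using Suc.IH by simp
qed simp

lemma wstar_eqI:
  assumes w: "X1 *v w = y1" "X2 *v w = y2"
    and orth: "w \<in> ((row_range X1)\<^sup>\<bottom> \<inter> (row_range X2)\<^sup>\<bottom>)\<^sup>\<bottom>"
  shows "wstar X1 y1 X2 y2 = w"
proof -
  have pythagoras: "(norm x)\<^sup>2 = (norm w)\<^sup>2 + (norm (x - w))\<^sup>2"
    if "X1 *v x = y1" "X2 *v x = y2" for x
  proof -
    have "X1 *v (x - w) = 0" "X2 *v (x - w) = 0"
      using that w by (simp_all add: matrix_vector_mult_diff_distrib)
    then have "x - w \<in> (row_range X1)\<^sup>\<bottom> \<inter> (row_range X2)\<^sup>\<bottom>"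
      by (simp add: matrix_vector_mult_eq_0_iff_orthogonal_row_range)
    then have "(x - w) \<bullet> w = 0"
      using orth unfolding orthogonal_comp_iff[of w] by blast
    then have "orthogonal w (x - w)"
      by (simp add: orthogonal_def inner_commute)
    then show ?thesis
      using norm_add_Pythagorean[of w "x - w"] by simp
  qed
  have min: "norm w \<le> norm x" if "X1 *v x = y1" "X2 *v x = y2" for x
    by (rule power2_le_imp_le) (simp_all add: pythagoras[OF that])
  show ?thesis
    unfolding wstar_def
  proof (rule the_equality)
    show "X1 *v w = y1 \<and> X2 *v w = y2 \<and> (\<forall>x. X1 *v x = y1 \<and> X2 *v x = y2 \<longrightarrow> norm w \<le> norm x)"
      using w min by blast
  next
    fix x assume x: "X1 *v x = y1 \<and> X2 *v x = y2 \<and> (\<forall>v. X1 *v v = y1 \<and> X2 *v v = y2 \<longrightarrow> norm x \<le> norm v)"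
    then have "norm x \<le> norm w"
      using w by blast
    then have "(norm x)\<^sup>2 \<le> (norm w)\<^sup>2"
      by (simp add: power_mono)
    moreover have "(norm x)\<^sup>2 = (norm w)\<^sup>2 + (norm (x - w))\<^sup>2"
      using x pythagoras by blast
    ultimately have "(norm (x - w))\<^sup>2 \<le> 0"
      by linarith
    then show "x = w"
      by simp
  qed
qed

lemma min_norm_solution_exists:
  assumes "X1 *v w0 = y1" "X2 *v w0 = y2"
  obtains w where "X1 *v w = y1" "X2 *v w = y2"
    "w \<in> ((row_range X1)\<^sup>\<bottom> \<inter> (row_range X2)\<^sup>\<bottom>)\<^sup>\<bottom>"
proof
  let ?M = "(row_range X1)\<^sup>\<bottom> \<inter> (row_range X2)\<^sup>\<bottom>"
  let ?w = "orth_proj (?M\<^sup>\<bottom>) w0"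
  have M: "subspace ?M"
    by (intro subspace_inter subspace_orthogonal_comp)
  show "?w \<in> ?M\<^sup>\<bottom>"
    by (rule orth_proj_in[OF subspace_orthogonal_comp])
  have "w0 - ?w \<in> ?M"
    using orth_proj_residual[OF subspace_orthogonal_comp[of ?M], of w0] orthogonal_comp_self[OF M] by simp
  then have "X1 *v (w0 - ?w) = 0" "X2 *v (w0 - ?w) = 0"
    by (simp_all add: matrix_vector_mult_eq_0_iff_orthogonal_row_range)
  then show "X1 *v ?w = y1" "X2 *v ?w = y2"
    using assms by (simp_all add: matrix_vector_mult_diff_distrib)
qed

lemma cyclic_error_bound:
  assumes "friedrichs_angle (row_range X1) (row_range X2) r u v i0"
    and w: "X1 *v w = y1" "X2 *v w = y2" "w \<in> ((row_range X1)\<^sup>\<bottom> \<inter> (row_range X2)\<^sup>\<bottom>)\<^sup>\<bottom>"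
  shows "(norm (cyc_iter X1 y1 X2 y2 (2 * Suc k) - w))\<^sup>2 \<le> ((u i0 \<bullet> v i0)\<^sup>2) ^ (2 * k + 1) * (norm w)\<^sup>2"
proof -
  interpret friedrichs_angle "row_range X1" "row_range X2" r u v i0
    by fact
  have "- w \<in> ((row_range X1)\<^sup>\<bottom> \<inter> (row_range X2)\<^sup>\<bottom>)\<^sup>\<bottom>"
    using w(3) by (simp add: subspace_neg subspace_orthogonal_comp)
  then have "norm (cyc_iter X1 y1 X2 y2 (2 * Suc k) - w) \<le> \<bar>u i0 \<bullet> v i0\<bar> ^ (2 * k + 1) * norm w"
    using alternating_orth_proj_bound[of "- w" k] by (simp only: cyc_iter_error[OF w(1,2)] norm_minus_cancel)
  then have "(norm (cyc_iter X1 y1 X2 y2 (2 * Suc k) - w))\<^sup>2 \<le> (\<bar>u i0 \<bullet> v i0\<bar> ^ (2 * k + 1) * norm w)\<^sup>2"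
    by (rule power_mono) simp
  then show ?thesis
    by (simp add: power_mult_distrib power_even_abs flip: power_mult)
qed

lemma cyclic_error_tight:
  assumes "friedrichs_angle (row_range X1) (row_range X2) r u v i0"
    and lt: "\<bar>u i0 \<bullet> v i0\<bar> < 1" and S: "in_S2 X1 y1 X2 y2"
  shows "\<exists>y1' y2'. in_S2 X1 y1' X2 y2' \<and> wstar X1 y1' X2 y2' \<noteq> 0 \<and>
           (norm (cyc_iter X1 y1' X2 y2' (2 * Suc k) - wstar X1 y1' X2 y2'))\<^sup>2
             = ((u i0 \<bullet> v i0)\<^sup>2) ^ (2 * k + 1) * (norm (wstar X1 y1' X2 y2'))\<^sup>2"
proof -
  interpret friedrichs_angle "row_range X1" "row_range X2" r u v i0
    by fact
  let ?p1 = "orth_proj ((row_range X1)\<^sup>\<bottom>)" and ?p2 = "orth_proj ((row_range X2)\<^sup>\<bottom>)"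
    and ?s = "(u i0 \<bullet> v i0)\<^sup>2"
  obtain x where x: "x \<in> (row_range X1)\<^sup>\<bottom>"
    "x \<in> ((row_range X1)\<^sup>\<bottom> \<inter> (row_range X2)\<^sup>\<bottom>)\<^sup>\<bottom>" "x \<noteq> 0" "norm x \<le> 1"
    and eig: "?p1 (?p2 x) = ?s *\<^sub>R x" and norm_p2: "(norm (?p2 x))\<^sup>2 = ?s * (norm x)\<^sup>2"
    using friedrichs_eigenvector[OF lt] by blast
  define y1' where "y1' = X1 *v (- x)"
  define y2' where "y2' = X2 *v (- x)"
  have "in_S2 X1 y1' X2 y2'"
    using S x(4) unfolding in_S2_def is_task_def y1'_def y2'_def by (auto intro!: exI[of _ "- x"])
  moreover have "wstar X1 y1' X2 y2' = - x"
    using x(2) by (intro wstar_eqI) (simp_all add: y1'_def y2'_def subspace_neg subspace_orthogonal_comp)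
  moreover have "cyc_iter X1 y1' X2 y2' (2 * Suc k) - (- x) = ?s ^ k *\<^sub>R ?p2 x"
    unfolding cyc_iter_error[of X1 "- x" y1' X2 y2', OF y1'_def[symmetric] y2'_def[symmetric]] minus_minus
    using orth_proj_id[OF subspace_orthogonal_comp x(1)] eig
    by (intro funpow_alternating_eigen linear_orth_proj subspace_orthogonal_comp)
  ultimately show ?thesis
    using x(3) norm_p2 by (intro exI[of _ y1'] exI[of _ y2']) (simp add: power_mult_distrib flip: power_mult)
qed

theorem mainTheorem3:
  fixes X1 :: "real^'d^'n1" and y1 :: "real^'n1"
    and X2 :: "real^'d^'n2" and y2 :: "real^'n2"
    and u v :: "nat \<Rightarrow> real^'d" and n :: nat
  assumes S: "in_S2 X1 y1 X2 y2"
    and pv: "principal_vectors (row_range X1) (row_range X2)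
               (min (rank X1) (rank X2)) u v"
    and nz: "\<exists>i < min (rank X1) (rank X2). arccos \<bar>u i \<bullet> v i\<bar> \<noteq> 0"
    and n: "n \<ge> 1"
  defines "\<theta>F \<equiv> Min {arccos \<bar>u i \<bullet> v i\<bar> | i. i < min (rank X1) (rank X2)
                                     \<and> arccos \<bar>u i \<bullet> v i\<bar> \<noteq> 0}"
  shows "((norm (cyc_iter X1 y1 X2 y2 (2*n) - wstar X1 y1 X2 y2))\<^sup>2
           \<le> ((cos \<theta>F)\<^sup>2) ^ (2*n - 1) * (norm (wstar X1 y1 X2 y2))\<^sup>2) \<and>
         (\<exists>y1' y2'. in_S2 X1 y1' X2 y2' \<and> wstar X1 y1' X2 y2' \<noteq> 0 \<and>
           (norm (cyc_iter X1 y1' X2 y2' (2*n) - wstar X1 y1' X2 y2'))\<^sup>2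
             = ((cos \<theta>F)\<^sup>2) ^ (2*n - 1) * (norm (wstar X1 y1' X2 y2'))\<^sup>2)"
proof -
  obtain i0 where i0: "i0 < min (rank X1) (rank X2)" "\<And>j. j < i0 \<Longrightarrow> \<bar>u j \<bullet> v j\<bar> = 1"
    and lt: "\<bar>u i0 \<bullet> v i0\<bar> < 1" and cos: "cos \<theta>F = \<bar>u i0 \<bullet> v i0\<bar>"
    using friedrichs_index[OF pv nz] unfolding \<theta>F_def by blast
  have F: "friedrichs_angle (row_range X1) (row_range X2) (min (rank X1) (rank X2)) u v i0"
    using pv i0 by unfold_locales (simp_all add: subspace_row_range)
  obtain k where k: "n = Suc k"
    using n by (cases n) auto
  then have exponent: "2 * n - 1 = 2 * k + 1"
    by simp
  obtain w0 where "X1 *v w0 = y1" "X2 *v w0 = y2"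
    using S unfolding in_S2_def by metis
  then obtain w where w: "X1 *v w = y1" "X2 *v w = y2"
    "w \<in> ((row_range X1)\<^sup>\<bottom> \<inter> (row_range X2)\<^sup>\<bottom>)\<^sup>\<bottom>"
    by (rule min_norm_solution_exists)
  have cos2: "(cos \<theta>F)\<^sup>2 = (u i0 \<bullet> v i0)\<^sup>2"
    by (simp add: cos)
  show ?thesis
    unfolding exponent unfolding k cos2 wstar_eqI[OF w]
    using cyclic_error_bound[OF F w] cyclic_error_tight[OF F lt S] by blast
qed

end
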